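(* Let $\lambda>0$ be such that $\theta([\lambda,\lambda(1+\frac{1}{n-1})])>0$, and let $\nu$ be the uniform probability measure on $[0,\lambda]^{n-1}$. Then the gap process is $\nu$-irreducible: for every $\mathbf{y}\in\mathbb{R}_+^{n-1}$ and every Borel $B\subseteq\mathbb{R}_+^{n-1}$ with $\nu(B)>0$, $$\mathbb{E}_{\mathbf{y}}\int_0^\infty\mathbf{1}_{\{\mathbf{Y}(t)\in B\}}\,dt>0.$$
   Context: Fix $n\ge 2$ and a probability law $\theta$ on $(0,\infty)$ with mean $1$. The $n$-particle Stochastic Follow-the-Leader system $\mathbf{X}=(X_1,\dots,X_n)$ on $\mathbb{R}$, $X_n<\dots<X_1$, evolves as a pure jump Markov process: the leader $X_1$ jumps forward at rate $1$ with i.i.d. jump sizes of law $\theta$; for $i\ge2$, $X_i$ jumps at rate $X_{i-1}-X_i$ to a uniform location in $(X_i,X_{i-1})$. The gap process $\mathbf{Y}$, $Y_i=X_i-X_{i+1}$, is Markov on $\mathbb{R}_+^{n-1}$; $\mathbb{E}_{\mathbf{y}}$ denotes expectation when $\mathbf{Y}(0)=\mathbf{y}$. *)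

theory Defs
  imports "HOL-Probability.Probability"
begin

text \<open>Stochastic Follow-the-Leader system with n particles, positions
  x 1 > x 2 > ... > x n (indices 1..n; other indices irrelevant).
  The pure jump Markov process is realised through its standard
  random-mapping representation: the k-th innovation is a quadruple
  (e, u, v, j) with e ~ Exp(1) (holding time before scaling by the total
  rate), u ~ Unif[0,1] (selects which particle jumps, with probability
  proportional to its rate), v ~ Unif[0,1] (uniform target location in
  the gap ahead) and j ~ theta (leader jump size), all independent and
  i.i.d. over k.\<close>

definition sfl_rate :: "nat \<Rightarrow> (nat \<Rightarrow> real) \<Rightarrow> real" where
  "sfl_rate n x = 1 + (\<Sum>i\<in>{2..n}. x (i - 1) - x i)"

text \<open>cumulative rate of particles 1..i (leader has rate 1, particle k \<ge> 2 has
  rate x (k-1) - x k)\<close>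
definition sfl_cum :: "(nat \<Rightarrow> real) \<Rightarrow> nat \<Rightarrow> real" where
  "sfl_cum x i = 1 + (\<Sum>k\<in>{2..i}. x (k - 1) - x k)"

definition sfl_pick :: "nat \<Rightarrow> (nat \<Rightarrow> real) \<Rightarrow> real \<Rightarrow> nat" where
  "sfl_pick n x u =
     (if \<exists>i\<in>{1..n}. u * sfl_rate n x < sfl_cum x i
      then (LEAST i. 1 \<le> i \<and> u * sfl_rate n x < sfl_cum x i) else 1)"

definition sfl_jump :: "nat \<Rightarrow> (nat \<Rightarrow> real) \<Rightarrow> real \<times> real \<times> real \<Rightarrow> nat \<Rightarrow> real" where
  "sfl_jump n x w =
     (case w of (u, v, j) \<Rightarrow>
       (let i = sfl_pick n x u in
        if i = 1 then x(1 := x 1 + j)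
        else x(i := x i + v * (x (i - 1) - x i))))"

type_synonym sfl_innov = "real \<times> real \<times> real \<times> real"

fun sfl_chain :: "nat \<Rightarrow> (nat \<Rightarrow> real) \<Rightarrow> (nat \<Rightarrow> sfl_innov) \<Rightarrow> nat \<Rightarrow> (nat \<Rightarrow> real)" where
  "sfl_chain n x0 \<omega> 0 = x0"
| "sfl_chain n x0 \<omega> (Suc k) = sfl_jump n (sfl_chain n x0 \<omega> k) (snd (\<omega> k))"

fun sfl_time :: "nat \<Rightarrow> (nat \<Rightarrow> real) \<Rightarrow> (nat \<Rightarrow> sfl_innov) \<Rightarrow> nat \<Rightarrow> real" where
  "sfl_time n x0 \<omega> 0 = 0"
| "sfl_time n x0 \<omega> (Suc k) =
     sfl_time n x0 \<omega> k + fst (\<omega> k) / sfl_rate n (sfl_chain n x0 \<omega> k)"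

definition sfl_gaps :: "nat \<Rightarrow> (nat \<Rightarrow> real) \<Rightarrow> nat \<Rightarrow> real" where
  "sfl_gaps n x = (\<lambda>i\<in>{1..<n}. x i - x (Suc i))"

definition sfl_init :: "(nat \<Rightarrow> real) \<Rightarrow> nat \<Rightarrow> real" where
  "sfl_init y i = - (\<Sum>k\<in>{1..<i}. y k)"

text \<open>the gap process Y(t) started from gaps y (None after a possible explosion
  time, i.e. the minimal process)\<close>
definition sfl_Y :: "nat \<Rightarrow> (nat \<Rightarrow> real) \<Rightarrow> (nat \<Rightarrow> sfl_innov) \<Rightarrow> real \<Rightarrow> (nat \<Rightarrow> real) option" where
  "sfl_Y n y \<omega> t =
     (let T = sfl_time n (sfl_init y) \<omega> in
      if \<exists>k. T k \<le> t \<and> t < T (Suc k)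
      then Some (sfl_gaps n (sfl_chain n (sfl_init y) \<omega> (LEAST k. T k \<le> t \<and> t < T (Suc k))))
      else None)"

definition sfl_innov_measure :: "real measure \<Rightarrow> sfl_innov measure" where
  "sfl_innov_measure \<theta> =
     density lborel (exponential_density 1) \<Otimes>\<^sub>M
       (uniform_measure lborel {0..1} \<Otimes>\<^sub>M (uniform_measure lborel {0..1} \<Otimes>\<^sub>M \<theta>))"

definition sfl_paths :: "real measure \<Rightarrow> (nat \<Rightarrow> sfl_innov) measure" where
  "sfl_paths \<theta> = PiM UNIV (\<lambda>_. sfl_innov_measure \<theta>)"

definition sfl_occupation :: "real measure \<Rightarrow> nat \<Rightarrow> (nat \<Rightarrow> real) \<Rightarrow> (nat \<Rightarrow> real) set \<Rightarrow> ennreal" where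
  "sfl_occupation \<theta> n y B =
     (\<integral>\<^sup>+ \<omega>. (\<integral>\<^sup>+ t. indicator {t. t \<ge> 0 \<and> (\<exists>z\<in>B. sfl_Y n y \<omega> t = Some z)} t \<partial>lborel)
        \<partial>sfl_paths \<theta>)"

definition sfl_space :: "nat \<Rightarrow> (nat \<Rightarrow> real) measure" where
  "sfl_space n = PiM {1..<n} (\<lambda>_. borel)"

definition sfl_nu :: "nat \<Rightarrow> real \<Rightarrow> (nat \<Rightarrow> real) measure" where
  "sfl_nu n lam = uniform_measure (PiM {1..<n} (\<lambda>_. lborel)) (PiE {1..<n} (\<lambda>_. {0..lam}))"

end

theory Submission
  imports Defs
begin

text \<open>We exhibit one scenario of positive probability that ends with the gap vector in
  \<open>B \<inter> [0,\<lambda>]\<^sup>n\<^sup>-\<^sup>1\<close> and then keeps it there for a time bounded below.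
  First the leader makes \<open>n - 1\<close> jumps with sizes in \<open>[\<lambda>, \<lambda>(1 + 1/(n-1))] \<subseteq> [\<lambda>, 2\<lambda>]\<close>;
  this opens the first gap to at least \<open>(n-1)\<lambda>\<close> while the total jump rate stays below
  \<open>R\<^sub>m\<^sub>a\<^sub>x = R\<^sub>0 + 2\<lambda>(n-1)\<close>, where \<open>R\<^sub>0\<close> is the initial rate. Then particles \<open>2, \<dots>, n\<close> jump once each, in this order.
  When particle \<open>i+1\<close> jumps into a gap of length \<open>m \<ge> (n-i)\<lambda>\<close>, the new \<open>i\<close>-th gap is
  uniform on \<open>[0,m]\<close>; if it is at most \<open>\<lambda>\<close>, as the target requires, the new \<open>(i+1)\<close>-st gap is
  still at least \<open>(n-i-1)\<lambda>\<close>.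
  Particle \<open>i+1\<close> is chosen with probability \<open>m/R \<ge> m/R\<^sub>m\<^sub>a\<^sub>x\<close>, and this factor \<open>m\<close>
  cancels the density \<open>1/m\<close> of the new gap, so each sweep step costs only a factor
  \<open>1/R\<^sub>m\<^sub>a\<^sub>x\<close> and integrates out one coordinate of the Lebesgue measure of the target.
  Altogether the scenario has probability at least a positive constant times
  \<open>Leb(B \<inter> [0,\<lambda>]\<^sup>n\<^sup>-\<^sup>1)\<close>, and since the total rate is then at most \<open>1 + (n-1)\<lambda>\<close>, a holding
  variable at least \<open>1\<close> keeps the gaps in \<open>B\<close> for time at least \<open>1/(1 + (n-1)\<lambda>)\<close>.

  Formally, the jump chain is the iteration of random maps driven by the i.i.d. innovations.
  Replacing each map by one that abandons the chain as soon as it leaves the scenario turns the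
  probability of the scenario into an iterated integral over single innovations, which is
  bounded from below one step at a time.\<close>

section \<open>Rates, ordering and the choice of the jumping particle\<close>

lemma sfl_rate_eq: "1 \<le> n \<Longrightarrow> sfl_rate n x = 1 + x 1 - x n"
  unfolding sfl_rate_def using sum_telescope''[of 1 n "\<lambda>k. - x k"] by (simp add: numeral_2_eq_2)

lemma sfl_cum_eq: "1 \<le> i \<Longrightarrow> sfl_cum x i = 1 + x 1 - x i"
  unfolding sfl_cum_def using sum_telescope''[of 1 i "\<lambda>k. - x k"] by (simp add: numeral_2_eq_2)

definition sfl_ordered :: "nat \<Rightarrow> (nat \<Rightarrow> real) \<Rightarrow> bool" where
  "sfl_ordered n x \<longleftrightarrow> (\<forall>i\<in>{2..n}. x i \<le> x (i - 1))"

lemma sfl_ordered_mono: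
  assumes "sfl_ordered n x" "1 \<le> i" "i \<le> j" "j \<le> n"
  shows "x j \<le> x i"
  using assms(3,4)
proof (induction j rule: dec_induct)
  case base
  then show ?case by simp
next
  case (step j)
  have "x (Suc j) \<le> x j"
    using assms(1,2) step unfolding sfl_ordered_def
    by (metis Suc_le_mono atLeastAtMost_iff diff_Suc_1 le_trans one_le_numeral Suc_1)
  then show ?case using step by simp
qed

lemma sfl_rate_ge_1: "1 \<le> n \<Longrightarrow> sfl_ordered n x \<Longrightarrow> 1 \<le> sfl_rate n x"
  using sfl_rate_eq[of n x] sfl_ordered_mono[of n x 1 n] by auto

lemma sfl_rate_le_gap_bound:
  assumes "sfl_gaps n x \<in> PiE {1..<n} (\<lambda>_. {0..lam})"
  shows "sfl_rate n x \<le> 1 + real (n - 1) * lam"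
proof -
  have "(\<Sum>i\<in>{2..n}. x (i - 1) - x i) \<le> real (card {2..n}) * lam"
  proof (rule sum_bounded_above)
    fix i assume i: "i \<in> {2..n}"
    have "sfl_gaps n x (i - 1) \<in> {0..lam}"
      by (rule PiE_mem[OF assms]) (use i in auto)
    moreover have "sfl_gaps n x (i - 1) = x (i - 1) - x i"
      using i unfolding sfl_gaps_def by auto
    ultimately show "x (i - 1) - x i \<le> lam" by simp
  qed
  then show ?thesis unfolding sfl_rate_def by simp
qed

definition sfl_selects :: "nat \<Rightarrow> nat \<Rightarrow> (nat \<Rightarrow> real) \<Rightarrow> real \<Rightarrow> bool" where
  "sfl_selects n p x u \<longleftrightarrow>
     (if p = 1 then u * sfl_rate n x < 1 else sfl_cum x (p - 1) \<le> u * sfl_rate n x)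
     \<and> u * sfl_rate n x < sfl_cum x p"

lemma sfl_pick_eqI:
  assumes "sfl_ordered n x" "1 \<le> p" "p \<le> n" "sfl_selects n p x u"
  shows "sfl_pick n x u = p"
proof -
  have ex: "\<exists>i\<in>{1..n}. u * sfl_rate n x < sfl_cum x i"
    using assms unfolding sfl_selects_def by auto
  have "(LEAST i. 1 \<le> i \<and> u * sfl_rate n x < sfl_cum x i) = p"
  proof (rule Least_equality)
    show "1 \<le> p \<and> u * sfl_rate n x < sfl_cum x p"
      using assms unfolding sfl_selects_def by auto
  next
    fix i assume i: "1 \<le> i \<and> u * sfl_rate n x < sfl_cum x i"
    show "p \<le> i"
    proof (rule ccontr)
      assume "\<not> p \<le> i"
      then have "i \<le> p - 1" "p \<noteq> 1" using i by auto
      then have "x (p - 1) \<le> x i" using sfl_ordered_mono[OF assms(1), of i "p - 1"] i assms by auto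
      then have "sfl_cum x i \<le> sfl_cum x (p - 1)" using sfl_cum_eq i \<open>p \<noteq> 1\<close> assms(2) by simp
      then show False using i assms(4) \<open>p \<noteq> 1\<close> unfolding sfl_selects_def by auto
    qed
  qed
  then show ?thesis using ex unfolding sfl_pick_def by simp
qed

lemma sfl_selects_leader_window:
  "0 < sfl_rate n x \<Longrightarrow> {u. sfl_selects n 1 x u} = {..<1 / sfl_rate n x}"
  by (auto simp: sfl_selects_def sfl_cum_eq pos_less_divide_eq)

lemma sfl_selects_follower_window:
  assumes "1 \<le> i" "0 < sfl_rate n x"
  shows "{u. sfl_selects n (Suc i) x u} =
    {(1 + x 1 - x i) / sfl_rate n x ..< (1 + x 1 - x (Suc i)) / sfl_rate n x}"
  using assms by (auto simp: sfl_selects_def sfl_cum_eq pos_divide_le_eq pos_less_divide_eq)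

definition sfl_move :: "nat \<Rightarrow> (nat \<Rightarrow> real) \<Rightarrow> real \<Rightarrow> real \<Rightarrow> nat \<Rightarrow> real" where
  "sfl_move p x v j = (if p = 1 then x(1 := x 1 + j) else x(p := x p + v * (x (p - 1) - x p)))"

lemma sfl_jump_eq_move:
  "sfl_jump n x w = sfl_move (sfl_pick n x (fst w)) x (fst (snd w)) (snd (snd w))"
  by (cases w) (auto simp: sfl_jump_def sfl_move_def Let_def)

lemma sfl_move_apply:
  "sfl_move p x v j i =
    (if p = 1 then (if i = 1 then x 1 + j else x i)
     else if i = p then x p + v * (x (p - 1) - x p) else x i)"
  unfolding sfl_move_def by auto

lemma sfl_move_leader:
  fixes v :: real
  assumes "2 \<le> n" "x 0 = 0" "sfl_ordered n x" "0 \<le> J"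
  defines "x' \<equiv> sfl_move 1 x v J"
  shows "x' 0 = 0" "sfl_ordered n x'" "x' 1 - x' 2 = x 1 - x 2 + J"
    "sfl_rate n x' = sfl_rate n x + J"
proof -
  show "x' 0 = 0" "x' 1 - x' 2 = x 1 - x 2 + J"
    using assms(2) unfolding x'_def sfl_move_def by auto
  show "sfl_ordered n x'"
    unfolding sfl_ordered_def
  proof
    fix q assume q: "q \<in> {2..n}"
    have "x q \<le> x (q - 1)" using assms(3) q unfolding sfl_ordered_def by auto
    then show "x' q \<le> x' (q - 1)" using q assms(4) unfolding x'_def sfl_move_def by auto
  qed
  show "sfl_rate n x' = sfl_rate n x + J"
    using sfl_rate_eq[of n x'] sfl_rate_eq[of n x] assms(1) unfolding x'_def sfl_move_def by auto
qed

lemma sfl_move_follower: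
  fixes j :: real
  assumes "1 \<le> i" "i < n" "x 0 = 0" "sfl_ordered n x"
    and gap: "real (n - i) * lam \<le> x i - x (Suc i)"
    and v: "0 \<le> v" "v \<le> 1" "(1 - v) * (x i - x (Suc i)) \<le> lam"
  defines "x' \<equiv> sfl_move (Suc i) x v j"
  shows "x' 0 = 0" "sfl_ordered n x'"
    "Suc i < n \<Longrightarrow> real (n - Suc i) * lam \<le> x' (Suc i) - x' (Suc (Suc i))"
    "sfl_rate n x' \<le> sfl_rate n x"
proof -
  define m where "m = x i - x (Suc i)"
  have m: "0 \<le> m" using sfl_ordered_mono[OF assms(4), of i "Suc i"] assms(1,2) unfolding m_def by auto
  have x'a: "x' q = (if q = Suc i then x (Suc i) + v * m else x q)" for q
    using assms(1) unfolding x'_def sfl_move_apply m_def by auto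
  have vm: "0 \<le> v * m" "v * m \<le> m" using v(1,2) m by (simp_all add: mult_left_le_one_le)
  show "x' 0 = 0" using x'a assms(3) by simp
  show "sfl_ordered n x'"
    unfolding sfl_ordered_def
  proof
    fix q assume q: "q \<in> {2..n}"
    have "x q \<le> x (q - 1)" using assms(4) q unfolding sfl_ordered_def by auto
    then show "x' q \<le> x' (q - 1)" using q vm unfolding x'a m_def by auto
  qed
  show "real (n - Suc i) * lam \<le> x' (Suc i) - x' (Suc (Suc i))" if si: "Suc i < n"
  proof -
    have "x (Suc (Suc i)) \<le> x (Suc i)"
      using sfl_ordered_mono[OF assms(4), of "Suc i" "Suc (Suc i)"] si by auto
    moreover have "real (n - Suc i) = real (n - i) - 1" using si by auto
    ultimately show ?thesis
      using gap v(3) unfolding x'a m_def by (auto simp: algebra_simps)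
  qed
  show "sfl_rate n x' \<le> sfl_rate n x"
    using sfl_rate_eq[of n x'] sfl_rate_eq[of n x] x'a[of 1] x'a[of n] assms(1,2) vm by auto
qed

lemma sfl_init_0: "sfl_init y 0 = 0"
  unfolding sfl_init_def by simp

lemma sfl_ordered_sfl_init:
  assumes "y \<in> PiE {1..<n} (\<lambda>_. {0..})"
  shows "sfl_ordered n (sfl_init y)"
  unfolding sfl_ordered_def
proof
  fix q assume q: "q \<in> {2..n}"
  then have "{1..<q} = insert (q - 1) {1..<q - 1}" "q - 1 \<in> {1..<n}" by auto
  then show "sfl_init y q \<le> sfl_init y (q - 1)"
    using assms unfolding sfl_init_def by (auto simp: PiE_iff)
qed

section \<open>Iterated random maps\<close>

fun iter_map :: "(nat \<Rightarrow> 'x \<Rightarrow> 'w \<Rightarrow> 'x) \<Rightarrow> 'x \<Rightarrow> (nat \<Rightarrow> 'w) \<Rightarrow> nat \<Rightarrow> 'x" where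
  "iter_map st x0 \<omega> 0 = x0"
| "iter_map st x0 \<omega> (Suc k) = st k (iter_map st x0 \<omega> k) (\<omega> k)"

fun iter_kernel ::
  "(nat \<Rightarrow> 'x \<Rightarrow> 'w \<Rightarrow> 'x) \<Rightarrow> 'w measure \<Rightarrow> ('x \<Rightarrow> ennreal) \<Rightarrow> nat \<Rightarrow> nat \<Rightarrow> 'x \<Rightarrow> ennreal"
where
  "iter_kernel st M f 0 k x = f x"
| "iter_kernel st M f (Suc r) k x = (\<integral>\<^sup>+ w. iter_kernel st M f r (Suc k) (st k x w) \<partial>M)"

lemma iter_map_cong: "(\<And>j. j < k \<Longrightarrow> \<omega> j = \<omega>' j) \<Longrightarrow> iter_map st x0 \<omega> k = iter_map st x0 \<omega>' k"
  by (induction k) auto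

lemma iter_kernel_Suc_last:
  "iter_kernel st M f (Suc r) k x = iter_kernel st M (\<lambda>y. \<integral>\<^sup>+ w. f (st (k + r) y w) \<partial>M) r k x"
proof (induction r arbitrary: k x)
  case 0
  then show ?case by simp
next
  case (Suc r)
  show ?case
    by (subst iter_kernel.simps, subst Suc, simp add: add_Suc_right)
qed

lemma measurable_iter_map:
  assumes st: "\<And>k. (\<lambda>(x, w). st k x w) \<in> measurable (S \<Otimes>\<^sub>M M) S" and x0: "x0 \<in> space S"
    and "{..<k} \<subseteq> I"
  shows "(\<lambda>\<omega>. iter_map st x0 \<omega> k) \<in> measurable (PiM I (\<lambda>_. M)) S"
  using \<open>{..<k} \<subseteq> I\<close>
proof (induction k)
  case 0
  then show ?case using x0 by simp
next
  case (Suc k)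
  then have "{..<k} \<subseteq> I" "k \<in> I" by auto
  with Suc.IH have "(\<lambda>\<omega>. (iter_map st x0 \<omega> k, \<omega> k)) \<in> measurable (PiM I (\<lambda>_. M)) (S \<Otimes>\<^sub>M M)"
    by (intro measurable_Pair) auto
  from measurable_comp[OF this st] show ?case by (simp add: comp_def)
qed

lemma nn_integral_iter_map_PiM_lessThan:
  assumes M: "prob_space M" and st: "\<And>k. (\<lambda>(x, w). st k x w) \<in> measurable (S \<Otimes>\<^sub>M M) S"
    and x0: "x0 \<in> space S" and f: "f \<in> borel_measurable S"
  shows "(\<integral>\<^sup>+ \<omega>. f (iter_map st x0 \<omega> N) \<partial>PiM {..<N} (\<lambda>_. M)) = iter_kernel st M f N 0 x0"
  using f
proof (induction N arbitrary: f)
  case 0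
  then show ?case by (simp add: PiM_empty nn_integral_count_space_finite)
next
  case (Suc N)
  interpret prob_space M by (rule M)
  interpret P: product_prob_space "\<lambda>_. M" "UNIV :: nat set" by unfold_locales
  have fm[measurable]: "f \<in> borel_measurable S" by (rule Suc.prems)
  have "(\<lambda>\<omega>. iter_map st x0 \<omega> (Suc N)) \<in> measurable (PiM {..<Suc N} (\<lambda>_. M)) S"
    by (rule measurable_iter_map[OF st x0]) auto
  note pm = measurable_comp[OF this fm]
  have eq: "{..<Suc N} = insert N {..<N}" by auto
  have "(\<integral>\<^sup>+ \<omega>. f (iter_map st x0 \<omega> (Suc N)) \<partial>PiM {..<Suc N} (\<lambda>_. M))
      = (\<integral>\<^sup>+ \<omega>. (\<integral>\<^sup>+ w. f (iter_map st x0 (fun_upd \<omega> N w) (Suc N)) \<partial>M) \<partial>PiM {..<N} (\<lambda>_. M))"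
    unfolding eq by (rule P.product_nn_integral_insert) (use pm eq in \<open>auto simp: comp_def\<close>)
  also have "\<dots> = (\<integral>\<^sup>+ \<omega>. (\<lambda>y. \<integral>\<^sup>+ w. f (st N y w) \<partial>M) (iter_map st x0 \<omega> N) \<partial>PiM {..<N} (\<lambda>_. M))"
  proof (rule nn_integral_cong)
    fix \<omega>
    show "(\<integral>\<^sup>+ w. f (iter_map st x0 (fun_upd \<omega> N w) (Suc N)) \<partial>M)
      = (\<lambda>y. \<integral>\<^sup>+ w. f (st N y w) \<partial>M) (iter_map st x0 \<omega> N)"
      by (simp add: iter_map_cong[of N "fun_upd \<omega> N _" \<omega>])
  qed
  also have "\<dots> = iter_kernel st M (\<lambda>y. \<integral>\<^sup>+ w. f (st N y w) \<partial>M) N 0 x0"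
  proof (rule Suc.IH)
    have "(\<lambda>(y, w). f (st N y w)) \<in> borel_measurable (S \<Otimes>\<^sub>M M)"
      using measurable_comp[OF st fm] by (simp add: comp_def case_prod_beta')
    then show "(\<lambda>y. \<integral>\<^sup>+ w. f (st N y w) \<partial>M) \<in> borel_measurable S"
      by (simp add: borel_measurable_nn_integral)
  qed
  also have "\<dots> = iter_kernel st M f (Suc N) 0 x0"
    using iter_kernel_Suc_last[of st M f N 0 x0] by simp
  finally show ?case .
qed

lemma nn_integral_iter_map_PiM_UNIV:
  assumes M: "prob_space M" and st: "\<And>k. (\<lambda>(x, w). st k x w) \<in> measurable (S \<Otimes>\<^sub>M M) S"
    and x0: "x0 \<in> space S" and f: "f \<in> borel_measurable S"
  shows "(\<integral>\<^sup>+ \<omega>. f (iter_map st x0 \<omega> N) \<partial>PiM UNIV (\<lambda>_. M)) = iter_kernel st M f N 0 x0"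
proof -
  interpret prob_space M by (rule M)
  interpret P: product_prob_space "\<lambda>_. M" "UNIV :: nat set" by unfold_locales
  have fm: "(\<lambda>\<omega>. f (iter_map st x0 \<omega> N)) \<in> borel_measurable (PiM {..<N} (\<lambda>_. M))"
    using measurable_comp[OF measurable_iter_map[OF st x0 order.refl] f] by (simp add: comp_def)
  have "(\<integral>\<^sup>+ \<omega>. f (iter_map st x0 \<omega> N) \<partial>PiM UNIV (\<lambda>_. M))
      = (\<integral>\<^sup>+ \<omega>. f (iter_map st x0 (restrict \<omega> {..<N}) N) \<partial>PiM UNIV (\<lambda>_. M))"
    by (intro nn_integral_cong arg_cong[where f = f] iter_map_cong) auto
  also have "\<dots> = (\<integral>\<^sup>+ \<omega>. f (iter_map st x0 \<omega> N)
      \<partial>distr (PiM UNIV (\<lambda>_. M)) (PiM {..<N} (\<lambda>_. M)) (\<lambda>\<omega>. restrict \<omega> {..<N}))"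
    by (rule nn_integral_distr[symmetric], rule measurable_restrict_subset)
      (simp_all add: measurable_distr_eq1 fm)
  also have "\<dots> = (\<integral>\<^sup>+ \<omega>. f (iter_map st x0 \<omega> N) \<partial>PiM {..<N} (\<lambda>_. M))"
    by (subst P.distr_PiM_restrict_finite) auto
  also have "\<dots> = iter_kernel st M f N 0 x0"
    by (rule nn_integral_iter_map_PiM_lessThan[OF M st x0 f])
  finally show ?thesis .
qed

section \<open>The law of one innovation\<close>

abbreviation exp_law :: "real measure" where
  "exp_law \<equiv> density lborel (exponential_density 1)"

abbreviation unif_01 :: "real measure" where
  "unif_01 \<equiv> uniform_measure lborel {0..1}"

abbreviation innov_space :: "sfl_innov measure" where
  "innov_space \<equiv> borel \<Otimes>\<^sub>M (borel \<Otimes>\<^sub>M (borel \<Otimes>\<^sub>M borel))"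

lemma prob_space_exp_law: "prob_space exp_law"
  by (rule prob_space_exponential_density) simp

lemma prob_space_unif_01: "prob_space unif_01"
  by (rule prob_space_uniform_measure) auto

lemma sets_sfl_innov_measure: "sets \<theta> = sets borel \<Longrightarrow> sets (sfl_innov_measure \<theta>) = sets innov_space"
  unfolding sfl_innov_measure_def by (intro sets_pair_measure_cong) auto

lemma prob_space_sfl_innov_measure: "prob_space \<theta> \<Longrightarrow> prob_space (sfl_innov_measure \<theta>)"
  unfolding sfl_innov_measure_def by (intro prob_space_pair prob_space_exp_law prob_space_unif_01)

lemma nn_integral_pair_measure_mult:
  assumes "sigma_finite_measure M2" "a \<in> borel_measurable M1" "g \<in> borel_measurable M2"
  shows "(\<integral>\<^sup>+ z. a (fst z) * g (snd z) \<partial>(M1 \<Otimes>\<^sub>M M2)) = (\<integral>\<^sup>+ x. a x \<partial>M1) * (\<integral>\<^sup>+ y. g y \<partial>M2)"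
proof -
  interpret M2: sigma_finite_measure M2 by fact
  have "(\<integral>\<^sup>+ z. a (fst z) * g (snd z) \<partial>(M1 \<Otimes>\<^sub>M M2)) = (\<integral>\<^sup>+ x. \<integral>\<^sup>+ y. a x * g y \<partial>M2 \<partial>M1)"
    using assms by (subst M2.nn_integral_fst[symmetric]) auto
  also have "\<dots> = (\<integral>\<^sup>+ x. a x * (\<integral>\<^sup>+ y. g y \<partial>M2) \<partial>M1)"
    using assms by (intro nn_integral_cong nn_integral_cmult) auto
  also have "\<dots> = (\<integral>\<^sup>+ x. a x \<partial>M1) * (\<integral>\<^sup>+ y. g y \<partial>M2)"
    using assms by (intro nn_integral_multc) auto
  finally show ?thesis .
qed

lemma nn_integral_sfl_innov_measure_mult:
  assumes \<theta>: "prob_space \<theta>" "sets \<theta> = sets borel"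
    and [measurable]: "a \<in> borel_measurable borel" "b \<in> borel_measurable borel"
      "c \<in> borel_measurable borel" "d \<in> borel_measurable borel"
  shows "(\<integral>\<^sup>+ w. a (fst w) * b (fst (snd w)) * c (fst (snd (snd w))) * d (snd (snd (snd w)))
      \<partial>sfl_innov_measure \<theta>)
    = (\<integral>\<^sup>+ x. a x \<partial>exp_law) * ((\<integral>\<^sup>+ x. b x \<partial>unif_01) * ((\<integral>\<^sup>+ x. c x \<partial>unif_01) * (\<integral>\<^sup>+ x. d x \<partial>\<theta>)))"
proof -
  have sf: "sigma_finite_measure (unif_01 \<Otimes>\<^sub>M (unif_01 \<Otimes>\<^sub>M \<theta>))"
    "sigma_finite_measure (unif_01 \<Otimes>\<^sub>M \<theta>)" "sigma_finite_measure \<theta>"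
    by (intro prob_space_imp_sigma_finite prob_space_pair prob_space_unif_01 \<theta>)+
  have dm: "d \<in> borel_measurable \<theta>"
    using measurable_cong_sets[OF \<theta>(2) refl, of borel] \<open>d \<in> borel_measurable borel\<close> by metis
  have bm: "b \<in> borel_measurable unif_01" "c \<in> borel_measurable unif_01"
    by simp_all
  have m3: "(\<lambda>z. c (fst z) * d (snd z)) \<in> borel_measurable (unif_01 \<Otimes>\<^sub>M \<theta>)"
    using bm dm by measurable
  have m2: "(\<lambda>z. b (fst z) * (c (fst (snd z)) * d (snd (snd z))))
      \<in> borel_measurable (unif_01 \<Otimes>\<^sub>M (unif_01 \<Otimes>\<^sub>M \<theta>))"
    using bm dm by measurable
  have "(\<integral>\<^sup>+ w. a (fst w) * b (fst (snd w)) * c (fst (snd (snd w))) * d (snd (snd (snd w)))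
      \<partial>sfl_innov_measure \<theta>)
     = (\<integral>\<^sup>+ w. a (fst w) * (\<lambda>z. b (fst z) * (c (fst (snd z)) * d (snd (snd z)))) (snd w)
      \<partial>sfl_innov_measure \<theta>)"
    by (simp add: mult.assoc)
  also have "\<dots> = (\<integral>\<^sup>+ x. a x \<partial>exp_law)
      * (\<integral>\<^sup>+ z. b (fst z) * (c (fst (snd z)) * d (snd (snd z))) \<partial>(unif_01 \<Otimes>\<^sub>M (unif_01 \<Otimes>\<^sub>M \<theta>)))"
    unfolding sfl_innov_measure_def by (rule nn_integral_pair_measure_mult[OF sf(1) _ m2]) simp
  also have "(\<integral>\<^sup>+ z. b (fst z) * (c (fst (snd z)) * d (snd (snd z))) \<partial>(unif_01 \<Otimes>\<^sub>M (unif_01 \<Otimes>\<^sub>M \<theta>)))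
     = (\<integral>\<^sup>+ x. b x \<partial>unif_01) * (\<integral>\<^sup>+ z. c (fst z) * d (snd z) \<partial>(unif_01 \<Otimes>\<^sub>M \<theta>))"
    by (rule nn_integral_pair_measure_mult[OF sf(2) bm(1) m3])
  also have "(\<integral>\<^sup>+ z. c (fst z) * d (snd z) \<partial>(unif_01 \<Otimes>\<^sub>M \<theta>))
     = (\<integral>\<^sup>+ x. c x \<partial>unif_01) * (\<integral>\<^sup>+ x. d x \<partial>\<theta>)"
    by (rule nn_integral_pair_measure_mult[OF sf(3) bm(2) dm])
  finally show ?thesis .
qed

lemma exp_law_nonneg: "(\<integral>\<^sup>+ x. indicator {0..} x \<partial>exp_law) = 1"
proof -
  have "(\<integral>\<^sup>+ x. indicator {0..} x \<partial>exp_law)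
      = (\<integral>\<^sup>+ x. ennreal (exponential_density 1 x) * indicator {0..} x \<partial>lborel)"
    by (subst nn_integral_density) auto
  also have "\<dots> = (\<integral>\<^sup>+ x. ennreal (exponential_density 1 x) \<partial>lborel)"
    by (intro nn_integral_cong) (auto simp: exponential_density_def indicator_def)
  also have "\<dots> = (\<integral>\<^sup>+ x. 1 \<partial>exp_law)"
    by (subst nn_integral_density) auto
  also have "\<dots> = 1"
    using prob_space.emeasure_space_1[OF prob_space_exp_law] by simp
  finally show ?thesis .
qed

lemma exp_law_ge_1_pos: "0 < (\<integral>\<^sup>+ x. indicator {1..} x \<partial>exp_law)"
proof -
  have "ennreal (exp (-2)) = (\<integral>\<^sup>+ x. ennreal (exp (-2)) * indicator {1..2::real} x \<partial>lborel)"
    by (subst nn_integral_cmult_indicator) auto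
  also have "\<dots> \<le> (\<integral>\<^sup>+ x. ennreal (exponential_density 1 x) * indicator {1..} x \<partial>lborel)"
    by (intro nn_integral_mono) (auto simp: exponential_density_def indicator_def)
  also have "\<dots> = (\<integral>\<^sup>+ x. indicator {1..} x \<partial>exp_law)"
    by (subst nn_integral_density) auto
  finally show ?thesis
    by (rule order.strict_trans2[rotated]) simp
qed

lemma unif_01_indicator:
  "A \<in> sets borel \<Longrightarrow> (\<integral>\<^sup>+ x. indicator A x \<partial>unif_01) = emeasure lborel ({0..1} \<inter> A)"
  by (simp add: divide_ennreal_def)

lemma unif_01_leader_selected:
  assumes "1 \<le> n" "sfl_ordered n x"
  shows "(\<integral>\<^sup>+ u. indicator {u. sfl_selects n 1 x u} u \<partial>unif_01) = ennreal (1 / sfl_rate n x)"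
proof -
  let ?R = "sfl_rate n x"
  have R: "1 \<le> ?R" by (rule sfl_rate_ge_1[OF assms])
  then have "0 \<le> 1 / ?R" "1 / ?R \<le> 1" by simp_all
  then have "{0..1} \<inter> {..<1 / ?R} = {0..<1 / ?R}" by auto
  then show ?thesis
    unfolding sfl_selects_leader_window[of n x, OF order.strict_trans2[OF zero_less_one R]]
    using \<open>0 \<le> 1 / ?R\<close> by (simp add: unif_01_indicator divide_ennreal_def)
qed

lemma unif_01_follower_selected:
  assumes "1 \<le> i" "i < n" "sfl_ordered n x"
  shows "(\<integral>\<^sup>+ u. indicator {u. sfl_selects n (Suc i) x u} u \<partial>unif_01)
    = ennreal ((x i - x (Suc i)) / sfl_rate n x)"
proof -
  let ?R = "sfl_rate n x"
  let ?a = "(1 + x 1 - x i) / ?R" and ?b = "(1 + x 1 - x (Suc i)) / ?R"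
  have R: "1 \<le> ?R" "?R = 1 + x 1 - x n"
    using sfl_rate_ge_1[of n x] sfl_rate_eq[of n x] assms by auto
  have x: "x i \<le> x 1" "x (Suc i) \<le> x i" "x n \<le> x (Suc i)"
    using sfl_ordered_mono[OF assms(3), of 1 i] sfl_ordered_mono[OF assms(3), of i "Suc i"]
      sfl_ordered_mono[OF assms(3), of "Suc i" n] assms(1,2) by auto
  have a0: "0 \<le> ?a" using x(1) R(1) by simp
  have ab: "?a \<le> ?b" using x(2) R(1) by (intro divide_right_mono) auto
  have b1: "?b \<le> 1" using x(3) R by (simp add: pos_divide_le_eq)
  have "(\<integral>\<^sup>+ u. indicator {u. sfl_selects n (Suc i) x u} u \<partial>unif_01)
      = emeasure lborel ({0..1} \<inter> {?a..<?b})"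
    unfolding sfl_selects_follower_window[OF assms(1) order.strict_trans2[OF zero_less_one R(1)]]
    by (rule unif_01_indicator) simp
  also have "{0..1} \<inter> {?a..<?b} = {?a..<?b}" using a0 b1 by auto
  also have "emeasure lborel {?a..<?b} = ennreal (?b - ?a)" using ab by simp
  also have "?b - ?a = (x i - x (Suc i)) / ?R" by (simp add: diff_divide_distrib[symmetric])
  finally show ?thesis .
qed

section \<open>Following a prescribed scenario\<close>

abbreviation position_space :: "(nat \<Rightarrow> real) measure" where
  "position_space \<equiv> PiM UNIV (\<lambda>_. borel)"

definition sfl_planned :: "nat \<Rightarrow> nat \<Rightarrow> nat" where
  "sfl_planned n k = (if k < n - 1 then 1 else k + 3 - n)"

text \<open>Coordinate \<open>0\<close> carries no particle; it records whether the scenario has been followed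
  so far (\<open>0\<close>) or abandoned (\<open>1\<close>).\<close>

definition sfl_planned_step :: "nat \<Rightarrow> nat \<Rightarrow> (nat \<Rightarrow> real) \<Rightarrow> sfl_innov \<Rightarrow> nat \<Rightarrow> real" where
  "sfl_planned_step n k x w = (case w of (e, u, v, j) \<Rightarrow>
     if k < 2 * n - 2 then
       (if x 0 = 0 \<and> sfl_ordered n x \<and> 0 \<le> e \<and> sfl_selects n (sfl_planned n k) x u
        then sfl_move (sfl_planned n k) x v j else x(0 := 1))
     else (if x 0 = 0 \<and> sfl_ordered n x \<and> 1 \<le> e then x else x(0 := 1)))"

lemma sfl_planned_step_apply:
  "sfl_planned_step n k x w i = (if k < 2 * n - 2 then
       (if x 0 = 0 \<and> sfl_ordered n x \<and> 0 \<le> fst w \<and> sfl_selects n (sfl_planned n k) x (fst (snd w))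
        then sfl_move (sfl_planned n k) x (fst (snd (snd w))) (snd (snd (snd w))) i
        else (if i = 0 then 1 else x i))
     else (if x 0 = 0 \<and> sfl_ordered n x \<and> 1 \<le> fst w then x i else (if i = 0 then 1 else x i)))"
  unfolding sfl_planned_step_def by (auto split: prod.splits)

lemma measurable_position[measurable]: "(\<lambda>x. x i) \<in> borel_measurable position_space"
  by (rule measurable_component_singleton) simp

lemma measurable_sfl_rate[measurable]: "sfl_rate n \<in> borel_measurable position_space"
  unfolding sfl_rate_def by measurable

lemma measurable_sfl_cum[measurable]: "(\<lambda>x. sfl_cum x p) \<in> borel_measurable position_space"
  unfolding sfl_cum_def by measurable

lemma measurable_sfl_ordered[measurable]: "Measurable.pred position_space (sfl_ordered n)"
proof -
  have "Measurable.pred position_space (\<lambda>x. x i \<le> x j)" for i j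
    unfolding pred_def by (rule borel_measurable_le) (rule measurable_position)+
  then show ?thesis unfolding sfl_ordered_def by (intro pred_intros_finite) auto
qed

lemma measurable_sfl_gaps[measurable]:
  "sfl_gaps n \<in> measurable position_space (PiM {1..<n} (\<lambda>_. borel))"
  unfolding sfl_gaps_def by measurable

lemma sets_sfl_selects: "{u. sfl_selects n p x u} \<in> sets borel"
proof -
  have "{u \<in> space borel. sfl_selects n p x u} \<in> sets borel"
    unfolding sfl_selects_def by measurable
  then show ?thesis by simp
qed

lemma measurable_sfl_planned_step:
  assumes "sets \<theta> = sets borel"
  shows "(\<lambda>(x, w). sfl_planned_step n k x w)
    \<in> measurable (position_space \<Otimes>\<^sub>M sfl_innov_measure \<theta>) position_space"
proof -
  have [measurable]:
    "Measurable.pred (position_space \<Otimes>\<^sub>M innov_space) (\<lambda>xw. sfl_selects n p (fst xw) (fst (snd (snd xw))))"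
    "(\<lambda>xw. sfl_move p (fst xw) (fst (snd (snd (snd xw)))) (snd (snd (snd (snd xw)))) i)
      \<in> borel_measurable (position_space \<Otimes>\<^sub>M innov_space)" for p i
    unfolding sfl_selects_def sfl_move_apply by measurable
  have "(\<lambda>(x, w). sfl_planned_step n k x w) \<in> measurable (position_space \<Otimes>\<^sub>M innov_space) position_space"
  proof (rule measurable_PiM_single')
    fix i :: nat
    show "(\<lambda>xw. (case xw of (x, w) \<Rightarrow> sfl_planned_step n k x w) i)
        \<in> borel_measurable (position_space \<Otimes>\<^sub>M innov_space)"
      unfolding case_prod_beta' sfl_planned_step_apply by measurable
  qed (auto simp: space_PiM)
  then show ?thesis
    by (subst measurable_cong_sets[OF sets_pair_measure_cong[OF refl sets_sfl_innov_measure[OF assms]]])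
      (rule refl)
qed

context
  fixes n :: nat
  assumes n2: "2 \<le> n"
begin

abbreviation planned_path :: "(nat \<Rightarrow> real) \<Rightarrow> (nat \<Rightarrow> sfl_innov) \<Rightarrow> nat \<Rightarrow> nat \<Rightarrow> real" where
  "planned_path x0 \<omega> k \<equiv> iter_map (sfl_planned_step n) x0 \<omega> k"

lemma sfl_planned_range: "k < 2 * n - 2 \<Longrightarrow> 1 \<le> sfl_planned n k \<and> sfl_planned n k \<le> n"
  unfolding sfl_planned_def using n2 by auto

lemma planned_path_alive_Suc:
  "planned_path x0 \<omega> (Suc k) 0 = 0 \<Longrightarrow> planned_path x0 \<omega> k 0 = 0"
  by (cases "\<omega> k" rule: prod_cases4) (auto simp: sfl_planned_step_def split: if_splits)

lemma planned_path_alive_le: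
  assumes "k \<le> m" "planned_path x0 \<omega> m 0 = 0"
  shows "planned_path x0 \<omega> k 0 = 0"
  using assms
proof (induction m rule: dec_induct)
  case (step m)
  then show ?case using planned_path_alive_Suc[of x0 \<omega> m] by blast
qed simp

lemma planned_path_step:
  assumes "k < 2 * n - 2" "planned_path x0 \<omega> (Suc k) 0 = 0"
  shows "sfl_ordered n (planned_path x0 \<omega> k)" "0 \<le> fst (\<omega> k)"
    "sfl_selects n (sfl_planned n k) (planned_path x0 \<omega> k) (fst (snd (\<omega> k)))"
    "planned_path x0 \<omega> (Suc k) =
       sfl_move (sfl_planned n k) (planned_path x0 \<omega> k) (fst (snd (snd (\<omega> k)))) (snd (snd (snd (\<omega> k))))"
proof -
  obtain e u v j where w: "\<omega> k = (e, u, v, j)" by (cases "\<omega> k") auto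
  show "sfl_ordered n (planned_path x0 \<omega> k)" "0 \<le> fst (\<omega> k)"
    "sfl_selects n (sfl_planned n k) (planned_path x0 \<omega> k) (fst (snd (\<omega> k)))"
    "planned_path x0 \<omega> (Suc k) =
       sfl_move (sfl_planned n k) (planned_path x0 \<omega> k) (fst (snd (snd (\<omega> k)))) (snd (snd (snd (\<omega> k))))"
    using assms by (auto simp: sfl_planned_step_def w split: if_splits)
qed

lemma planned_path_hold:
  assumes "planned_path x0 \<omega> (Suc (2 * n - 2)) 0 = 0"
  shows "sfl_ordered n (planned_path x0 \<omega> (2 * n - 2))" "1 \<le> fst (\<omega> (2 * n - 2))"
    "planned_path x0 \<omega> (Suc (2 * n - 2)) = planned_path x0 \<omega> (2 * n - 2)"
proof -
  obtain e u v j where w: "\<omega> (2 * n - 2) = (e, u, v, j)" by (cases "\<omega> (2 * n - 2)") auto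
  show "sfl_ordered n (planned_path x0 \<omega> (2 * n - 2))" "1 \<le> fst (\<omega> (2 * n - 2))"
    "planned_path x0 \<omega> (Suc (2 * n - 2)) = planned_path x0 \<omega> (2 * n - 2)"
    using assms by (auto simp: sfl_planned_step_def w split: if_splits)
qed

lemma planned_path_eq_sfl_chain:
  assumes alive: "planned_path x0 \<omega> (Suc (2 * n - 2)) 0 = 0" and "k \<le> 2 * n - 2"
  shows "planned_path x0 \<omega> k = sfl_chain n x0 \<omega> k"
  using \<open>k \<le> 2 * n - 2\<close>
proof (induction k)
  case 0
  then show ?case by simp
next
  case (Suc k)
  then have k: "k < 2 * n - 2" by simp
  have "planned_path x0 \<omega> (Suc k) 0 = 0"
    by (rule planned_path_alive_le[OF _ alive]) (use Suc.prems in simp)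
  note step = planned_path_step[OF k this]
  have "sfl_pick n (planned_path x0 \<omega> k) (fst (snd (\<omega> k))) = sfl_planned n k"
    using sfl_planned_range[OF k] step(1,3) by (intro sfl_pick_eqI) auto
  then show ?case using step(4) Suc k by (simp add: sfl_jump_eq_move)
qed

lemma sfl_time_Suc_ge_planned:
  assumes alive: "planned_path x0 \<omega> (Suc (2 * n - 2)) 0 = 0" and k: "k \<le> 2 * n - 2"
  shows "sfl_time n x0 \<omega> k \<le> sfl_time n x0 \<omega> (Suc k)"
proof -
  have "sfl_ordered n (planned_path x0 \<omega> k) \<and> 0 \<le> fst (\<omega> k)"
  proof (cases "k < 2 * n - 2")
    case True
    have "planned_path x0 \<omega> (Suc k) 0 = 0"
      by (rule planned_path_alive_le[OF _ alive]) (use True in simp)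
    then show ?thesis using planned_path_step[OF True] by simp
  next
    case False
    then have "k = 2 * n - 2" using k by simp
    then show ?thesis using planned_path_hold[OF alive] by simp
  qed
  then have "1 \<le> sfl_rate n (sfl_chain n x0 \<omega> k)" "0 \<le> fst (\<omega> k)"
    using planned_path_eq_sfl_chain[OF alive k] sfl_rate_ge_1[of n "planned_path x0 \<omega> k"] n2 by auto
  then show ?thesis by simp
qed

lemma sfl_time_mono_planned:
  assumes alive: "planned_path x0 \<omega> (Suc (2 * n - 2)) 0 = 0"
    and "a \<le> b" "b \<le> Suc (2 * n - 2)"
  shows "sfl_time n x0 \<omega> a \<le> sfl_time n x0 \<omega> b"
  using assms(2,3)
proof (induction b rule: dec_induct)
  case base
  then show ?case by simp
next
  case (step b)
  then have "b \<le> 2 * n - 2" "sfl_time n x0 \<omega> a \<le> sfl_time n x0 \<omega> b" by auto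
  with sfl_time_Suc_ge_planned[OF alive] show ?case by (meson order_trans)
qed

lemma sfl_holding_time_planned:
  assumes alive: "planned_path x0 \<omega> (Suc (2 * n - 2)) 0 = 0"
    and gaps: "sfl_gaps n (planned_path x0 \<omega> (2 * n - 2)) \<in> PiE {1..<n} (\<lambda>_. {0..lam})"
  shows "1 / (1 + real (n - 1) * lam)
    \<le> sfl_time n x0 \<omega> (Suc (2 * n - 2)) - sfl_time n x0 \<omega> (2 * n - 2)"
proof -
  note hold = planned_path_hold[OF alive]
  define R where "R = sfl_rate n (planned_path x0 \<omega> (2 * n - 2))"
  have "1 \<le> R" using hold(1) sfl_rate_ge_1[of n] n2 unfolding R_def by simp
  moreover have "R \<le> 1 + real (n - 1) * lam"
    using sfl_rate_le_gap_bound[OF gaps] unfolding R_def .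
  ultimately have "1 / (1 + real (n - 1) * lam) \<le> 1 / R" by (intro frac_le) auto
  also have "\<dots> \<le> fst (\<omega> (2 * n - 2)) / R"
    using hold(2) \<open>1 \<le> R\<close> by (intro divide_right_mono) auto
  finally show ?thesis
    using planned_path_eq_sfl_chain[OF alive order.refl] unfolding R_def by simp
qed

lemma sfl_Y_planned_hold:
  assumes alive: "planned_path (sfl_init y) \<omega> (Suc (2 * n - 2)) 0 = 0"
    and t: "sfl_time n (sfl_init y) \<omega> (2 * n - 2) \<le> t" "t < sfl_time n (sfl_init y) \<omega> (Suc (2 * n - 2))"
  shows "sfl_Y n y \<omega> t = Some (sfl_gaps n (planned_path (sfl_init y) \<omega> (2 * n - 2)))"
proof -
  let ?T = "sfl_time n (sfl_init y) \<omega>"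
  have "(LEAST k. ?T k \<le> t \<and> t < ?T (Suc k)) = 2 * n - 2"
  proof (rule Least_equality)
    show "?T (2 * n - 2) \<le> t \<and> t < ?T (Suc (2 * n - 2))" using t by simp
  next
    fix k assume k: "?T k \<le> t \<and> t < ?T (Suc k)"
    show "2 * n - 2 \<le> k"
    proof (rule ccontr)
      assume "\<not> 2 * n - 2 \<le> k"
      then have "?T (Suc k) \<le> ?T (2 * n - 2)"
        using sfl_time_mono_planned[OF alive, of "Suc k" "2 * n - 2"] by simp
      then show False using k t by simp
    qed
  qed
  moreover have "\<exists>k. ?T k \<le> t \<and> t < ?T (Suc k)" using t by blast
  ultimately show ?thesis
    unfolding sfl_Y_def Let_def using planned_path_eq_sfl_chain[OF alive order.refl] by simp
qed

end

section \<open>Sections of the target set\<close>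

lemma measurable_restrict_override:
  fixes n i :: nat
  shows "(\<lambda>s. \<lambda>j\<in>{1..<n}. if j < i then a j else s j)
    \<in> measurable (PiM {i..<n} (\<lambda>_. lborel)) (PiM {1..<n} (\<lambda>_. borel))"
proof (rule measurable_restrict)
  fix j assume j: "j \<in> {1..<n}"
  show "(\<lambda>s. if j < i then a j else s j) \<in> borel_measurable (PiM {i..<n} (\<lambda>_. lborel))"
  proof (cases "j < i")
    case False
    then have "j \<in> {i..<n}" using j by auto
    then have "(\<lambda>s. s j) \<in> measurable (PiM {i..<n} (\<lambda>_. lborel)) lborel"
      by (rule measurable_component_singleton)
    then show ?thesis using False by simp
  qed simp
qed

lemma measurable_restrict_override_point:
  fixes n i :: nat
  shows "(\<lambda>(t, s). \<lambda>j\<in>{1..<n}. if j < i then a j else if j = i then t else s j)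
    \<in> measurable (lborel \<Otimes>\<^sub>M PiM {Suc i..<n} (\<lambda>_. lborel)) (PiM {1..<n} (\<lambda>_. borel))"
proof -
  have "(\<lambda>ts. \<lambda>j\<in>{1..<n}. if j < i then a j else if j = i then fst ts else snd ts j)
     \<in> measurable (lborel \<Otimes>\<^sub>M PiM {Suc i..<n} (\<lambda>_. lborel)) (PiM {1..<n} (\<lambda>_. borel))"
  proof (rule measurable_restrict)
    fix j assume j: "j \<in> {1..<n}"
    consider "j < i" | "j = i" | "j \<in> {Suc i..<n}" using j by fastforce
    then show "(\<lambda>ts. if j < i then a j else if j = i then fst ts else snd ts j)
      \<in> borel_measurable (lborel \<Otimes>\<^sub>M PiM {Suc i..<n} (\<lambda>_. lborel))"
    proof cases
      case 3
      then have "(\<lambda>s. s j) \<in> measurable (PiM {Suc i..<n} (\<lambda>_. lborel)) lborel"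
        by (rule measurable_component_singleton)
      then have "(\<lambda>ts. snd ts j) \<in> measurable (lborel \<Otimes>\<^sub>M PiM {Suc i..<n} (\<lambda>_. lborel)) lborel"
        by (rule measurable_compose[OF measurable_snd])
      then show ?thesis using 3 by simp
    qed simp_all
  qed
  then show ?thesis by (simp add: case_prod_beta')
qed

lemma product_sigma_finite_lborel: "product_sigma_finite (\<lambda>_::nat. lborel)"
  by (simp add: product_sigma_finite_def lborel.sigma_finite_measure_axioms)

context
  fixes n :: nat and lam :: real and Bc :: "(nat \<Rightarrow> real) set"
  assumes sets_Bc: "Bc \<in> sets (PiM {1..<n} (\<lambda>_. borel))"
    and Bc_cube: "Bc \<subseteq> PiE {1..<n} (\<lambda>_. {0..lam})"
begin

text \<open>\<open>section_measure i x\<close> is the Lebesgue measure of the gap vectors in \<open>Bc\<close> whose first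
  \<open>i - 1\<close> gaps are those of the positions \<open>x\<close>; \<open>section_density i x t\<close> moreover fixes the
  \<open>i\<close>-th gap to \<open>t\<close>.\<close>

definition section_measure :: "nat \<Rightarrow> (nat \<Rightarrow> real) \<Rightarrow> ennreal" where
  "section_measure i x =
     (\<integral>\<^sup>+ s. indicator Bc (\<lambda>j\<in>{1..<n}. if j < i then x j - x (Suc j) else s j)
       \<partial>PiM {i..<n} (\<lambda>_. lborel))"

definition section_density :: "nat \<Rightarrow> (nat \<Rightarrow> real) \<Rightarrow> real \<Rightarrow> ennreal" where
  "section_density i x t =
     (\<integral>\<^sup>+ s. indicator Bc (\<lambda>j\<in>{1..<n}. if j < i then x j - x (Suc j) else if j = i then t else s j)
       \<partial>PiM {Suc i..<n} (\<lambda>_. lborel))"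

lemma measurable_section_density[measurable]: "section_density i x \<in> borel_measurable borel"
proof -
  interpret finite_product_sigma_finite "\<lambda>_::nat. lborel" "{Suc i..<n}"
    by (simp add: finite_product_sigma_finite_def product_sigma_finite_lborel
        finite_product_sigma_finite_axioms_def)
  have "(\<lambda>(t, s). indicator Bc (\<lambda>j\<in>{1..<n}. if j < i then x j - x (Suc j) else if j = i then t else s j)
      :: ennreal) \<in> borel_measurable (lborel \<Otimes>\<^sub>M PiM {Suc i..<n} (\<lambda>_. lborel))"
    using measurable_compose[OF measurable_restrict_override_point borel_measurable_indicator[OF sets_Bc]]
    by (simp add: case_prod_beta')
  then have "section_density i x \<in> borel_measurable lborel"
    unfolding section_density_def by (rule borel_measurable_nn_integral)
  then show ?thesis by simp
qed

lemma section_density_outside: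
  assumes "1 \<le> i" "i < n" "t \<notin> {0..lam}"
  shows "section_density i x t = 0"
proof -
  have "(\<lambda>j\<in>{1..<n}. if j < i then x j - x (Suc j) else if j = i then t else s j) \<notin> Bc" for s
  proof
    assume "(\<lambda>j\<in>{1..<n}. if j < i then x j - x (Suc j) else if j = i then t else s j) \<in> Bc"
    then have "(\<lambda>j\<in>{1..<n}. if j < i then x j - x (Suc j) else if j = i then t else s j)
        \<in> PiE {1..<n} (\<lambda>_. {0..lam})"
      using Bc_cube by blast
    then have "(\<lambda>j\<in>{1..<n}. if j < i then x j - x (Suc j) else if j = i then t else s j) i \<in> {0..lam}"
      by (rule PiE_mem) (use assms(1,2) in auto)
    then show False using assms by simp
  qed
  then show ?thesis unfolding section_density_def by simp
qed

lemma section_measure_eq_integral: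
  assumes "i < n"
  shows "section_measure i x = (\<integral>\<^sup>+ t. section_density i x t \<partial>lborel)"
proof -
  interpret product_sigma_finite "\<lambda>_::nat. lborel" by (rule product_sigma_finite_lborel)
  have eq: "{i..<n} = insert i {Suc i..<n}" using assms by auto
  have m: "(\<lambda>s. indicator Bc (\<lambda>j\<in>{1..<n}. if j < i then x j - x (Suc j) else s j) :: ennreal)
     \<in> borel_measurable (PiM (insert i {Suc i..<n}) (\<lambda>_. lborel))"
    unfolding eq[symmetric]
    using measurable_compose[OF measurable_restrict_override borel_measurable_indicator[OF sets_Bc]]
    by simp
  show ?thesis
    unfolding section_measure_def section_density_def eq
    by (subst product_nn_integral_insert_rev[OF _ _ m])
      (auto intro!: nn_integral_cong arg_cong[where f="indicator Bc"] restrict_ext)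
qed

lemma section_measure_last: "section_measure n x = indicator Bc (sfl_gaps n x)"
proof -
  have "section_measure n x = (\<integral>\<^sup>+ s. indicator Bc (\<lambda>j\<in>{1..<n}. if j < n then x j - x (Suc j) else s j)
      \<partial>count_space {\<lambda>_. undefined})"
    unfolding section_measure_def by (simp add: PiM_empty)
  also have "\<dots> = indicator Bc (\<lambda>j\<in>{1..<n}. if j < n then x j - x (Suc j) else undefined)"
    by (simp add: nn_integral_count_space_finite)
  also have "(\<lambda>j\<in>{1..<n}. if j < n then x j - x (Suc j) else undefined) = sfl_gaps n x"
    unfolding sfl_gaps_def by (intro restrict_ext) auto
  finally show ?thesis .
qed

lemma section_measure_first: "section_measure 1 x = emeasure (PiM {1..<n} (\<lambda>_. lborel)) Bc"
proof -
  have "Bc \<in> sets (PiM {1..<n} (\<lambda>_. lborel))"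
    using sets_Bc by (metis sets_PiM_cong sets_lborel)
  moreover have "section_measure 1 x = (\<integral>\<^sup>+ s. indicator Bc s \<partial>PiM {1..<n} (\<lambda>_. lborel))"
    unfolding section_measure_def
    by (intro nn_integral_cong)
      (auto simp: space_PiM PiE_def extensional_def restrict_def cong: if_cong
        intro!: arg_cong[where f="indicator Bc"])
  ultimately show ?thesis by simp
qed

lemma unif_01_section_density:
  assumes "1 \<le> i" "i < n" "lam \<le> m" "0 < m"
  shows "(\<integral>\<^sup>+ v. section_density i x ((1 - v) * m) \<partial>unif_01) = ennreal (1 / m) * section_measure i x"
proof -
  let ?G = "section_density i x"
  have outside: "?G ((1 - v) * m) = 0" if "v \<notin> {0..1}" for v
  proof (rule section_density_outside[OF assms(1,2)])
    show "(1 - v) * m \<notin> {0..lam}"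
    proof (cases "v < 0")
      case True
      then have "m < (1 - v) * m" using assms(4) by (simp add: algebra_simps mult_pos_neg)
      then show ?thesis using assms(3) by auto
    next
      case False
      then have "(1 - v) * m < 0" using that assms(4) by (simp add: mult_neg_pos)
      then show ?thesis by auto
    qed
  qed
  have [measurable]: "(\<lambda>v. ?G ((1 - v) * m)) \<in> borel_measurable borel"
    by measurable
  have "(\<integral>\<^sup>+ v. ?G ((1 - v) * m) \<partial>unif_01) = (\<integral>\<^sup>+ v. ?G ((1 - v) * m) * indicator {0..1} v \<partial>lborel)"
    by (subst nn_integral_uniform_measure) (simp_all add: divide_ennreal_def)
  also have "\<dots> = (\<integral>\<^sup>+ v. ?G (m + (- m) * v) \<partial>lborel)"
  proof (intro nn_integral_cong)
    fix v :: real
    have "m + (- m) * v = (1 - v) * m" by (simp add: algebra_simps)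
    then show "?G ((1 - v) * m) * indicator {0..1} v = ?G (m + (- m) * v)"
      using outside[of v] by (cases "v \<in> {0..1}") auto
  qed
  also have "\<dots> = ennreal (1 / m) * section_measure i x"
  proof -
    have "section_measure i x = ennreal \<bar>- m\<bar> * (\<integral>\<^sup>+ v. ?G (m + (- m) * v) \<partial>lborel)"
      unfolding section_measure_eq_integral[OF assms(2)]
      by (rule nn_integral_real_affine[OF measurable_section_density]) (use assms(4) in simp)
    moreover have "ennreal (1 / m) * ennreal m = 1"
      using assms(4) by (simp add: ennreal_mult''[symmetric])
    ultimately show ?thesis
      using assms(4) by (simp add: mult.assoc[symmetric])
  qed
  finally show ?thesis .
qed

section \<open>Probability of the scenario\<close>

context
  fixes \<theta> :: "real measure"
  assumes n2: "2 \<le> n" and prob_\<theta>: "prob_space \<theta>" and sets_\<theta>: "sets \<theta> = sets borel"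
    and lam_pos: "0 < lam"
begin

definition scenario_target :: "(nat \<Rightarrow> real) \<Rightarrow> ennreal" where
  "scenario_target x = indicator {x. x 0 = 0 \<and> sfl_gaps n x \<in> Bc} x"

definition success_prob :: "nat \<Rightarrow> (nat \<Rightarrow> real) \<Rightarrow> ennreal" where
  "success_prob k x =
     iter_kernel (sfl_planned_step n) (sfl_innov_measure \<theta>) scenario_target (2 * n - 1 - k) k x"

abbreviation hold_prob :: ennreal where
  "hold_prob \<equiv> \<integral>\<^sup>+ e. indicator {1..} e \<partial>exp_law"

abbreviation leader_window :: "real set" where
  "leader_window \<equiv> {lam .. lam * (1 + 1 / (real n - 1))}"

lemma measurable_scenario_target: "scenario_target \<in> borel_measurable position_space"
proof -
  have [measurable]: "Bc \<in> sets (PiM {1..<n} (\<lambda>_. borel))" by (rule sets_Bc)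
  have "{x \<in> space position_space. x 0 = 0 \<and> sfl_gaps n x \<in> Bc} \<in> sets position_space"
    by measurable
  then show ?thesis
    unfolding scenario_target_def[abs_def] by (simp add: space_PiM)
qed

lemma success_prob_step:
  assumes "k < 2 * n - 1"
  shows "success_prob k x = (\<integral>\<^sup>+ w. success_prob (Suc k) (sfl_planned_step n k x w) \<partial>sfl_innov_measure \<theta>)"
proof -
  have "2 * n - 1 - k = Suc (2 * n - 1 - Suc k)" using assms by simp
  then show ?thesis unfolding success_prob_def by simp
qed

lemma success_prob_last: "success_prob (2 * n - 1) x = scenario_target x"
  unfolding success_prob_def by simp

lemma success_prob_hold:
  assumes "x 0 = 0" "sfl_ordered n x"
  shows "success_prob (2 * n - 2) x = hold_prob * indicator Bc (sfl_gaps n x)"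
proof -
  let ?L = "indicator Bc (sfl_gaps n x) :: ennreal"
  have k: "2 * n - 2 < 2 * n - 1" "Suc (2 * n - 2) = 2 * n - 1" using n2 by auto
  have "success_prob (Suc (2 * n - 2)) (sfl_planned_step n (2 * n - 2) x w) =
      indicator {1..} (fst w) * 1 * 1
      * ?L" for w
    using assms unfolding k(2) success_prob_last
    by (cases w) (auto simp: sfl_planned_step_def scenario_target_def indicator_def)
  then have "success_prob (2 * n - 2) x
      = (\<integral>\<^sup>+ w. indicator {1..} (fst w) * 1 * 1
          * ?L \<partial>sfl_innov_measure \<theta>)"
    unfolding success_prob_step[OF k(1)] by simp
  also have "\<dots> = hold_prob * ((\<integral>\<^sup>+ _. 1 \<partial>unif_01) * ((\<integral>\<^sup>+ _. 1 \<partial>unif_01) * (\<integral>\<^sup>+ _. ?L \<partial>\<theta>)))"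
    by (rule nn_integral_sfl_innov_measure_mult[OF prob_\<theta> sets_\<theta>]) auto
  also have "\<dots> = hold_prob * ?L"
    by (simp add: prob_space.emeasure_space_1[OF prob_\<theta>] prob_space.emeasure_space_1[OF prob_space_unif_01])
  finally show ?thesis .
qed

text \<open>The probability \<open>m/R\<close> of choosing particle \<open>i+1\<close> and the density \<open>1/m\<close> of the new
  \<open>i\<close>-th gap combine to the factor \<open>1/R\<close>.\<close>

lemma nn_integral_follower_scenario:
  assumes i: "1 \<le> i" "i < n" and x: "sfl_ordered n x"
    and m: "lam \<le> x i - x (Suc i)" "0 < x i - x (Suc i)"
  shows "(\<integral>\<^sup>+ w. indicator {0..} (fst w) * indicator {u. sfl_selects n (Suc i) x u} (fst (snd w))
      * section_density i x ((1 - fst (snd (snd w))) * (x i - x (Suc i))) * C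
      \<partial>sfl_innov_measure \<theta>)
    = ennreal (1 / sfl_rate n x) * (C * section_measure i x)"
proof -
  let ?m = "x i - x (Suc i)" and ?R = "sfl_rate n x"
  have R: "0 < ?R" using sfl_rate_ge_1[of n x] x n2 by simp
  have "(\<integral>\<^sup>+ w. indicator {0..} (fst w) * indicator {u. sfl_selects n (Suc i) x u} (fst (snd w))
      * section_density i x ((1 - fst (snd (snd w))) * ?m) * C
      \<partial>sfl_innov_measure \<theta>)
    = (\<integral>\<^sup>+ e. indicator {0..} e \<partial>exp_law)
      * ((\<integral>\<^sup>+ u. indicator {u. sfl_selects n (Suc i) x u} u \<partial>unif_01)
      * ((\<integral>\<^sup>+ v. section_density i x ((1 - v) * ?m) \<partial>unif_01) * (\<integral>\<^sup>+ _. C \<partial>\<theta>)))"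
    by (rule nn_integral_sfl_innov_measure_mult[OF prob_\<theta> sets_\<theta>])
      (auto intro: borel_measurable_indicator sets_sfl_selects)
  also have "\<dots> = ennreal (?m / ?R) * ennreal (1 / ?m) * (C * section_measure i x)"
    unfolding exp_law_nonneg unif_01_follower_selected[OF i x] unif_01_section_density[OF i m]
    by (simp add: prob_space.emeasure_space_1[OF prob_\<theta>] mult_ac)
  also have "ennreal (?m / ?R) * ennreal (1 / ?m) = ennreal (1 / ?R)"
    using m R by (simp add: ennreal_mult''[symmetric])
  finally show ?thesis .
qed

lemma success_prob_follower_pointwise:
  assumes i: "1 \<le> i" "i < n" and x: "x 0 = 0" "sfl_ordered n x" and m: "lam \<le> x i - x (Suc i)"
    and next_bound: "\<And>v j. 0 \<le> v \<Longrightarrow> v \<le> 1 \<Longrightarrow> (1 - v) * (x i - x (Suc i)) \<le> lam \<Longrightarrow>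
      C * section_measure (Suc i) (sfl_move (Suc i) x v j) \<le> success_prob (n - 1 + i) (sfl_move (Suc i) x v j)"
  shows "indicator {0..} (fst w) * indicator {u. sfl_selects n (Suc i) x u} (fst (snd w))
      * section_density i x ((1 - fst (snd (snd w))) * (x i - x (Suc i))) * C
    \<le> success_prob (n - 1 + i) (sfl_planned_step n (n - 2 + i) x w)"
proof -
  let ?m = "x i - x (Suc i)"
  obtain e u v j where w: "w = (e, u, v, j)" by (cases w) auto
  show ?thesis
  proof (cases "0 \<le> e \<and> sfl_selects n (Suc i) x u \<and> (1 - v) * ?m \<in> {0..lam}")
    case False
    then show ?thesis
      unfolding w by (auto simp: indicator_def section_density_outside[OF i])
  next
    case True
    then have "0 \<le> v * ?m" "0 \<le> (1 - v) * ?m" using m by (auto simp: algebra_simps)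
    then have v: "0 \<le> v" "v \<le> 1" "(1 - v) * ?m \<le> lam"
      using True m lam_pos by (auto simp: zero_le_mult_iff)
    define k where "k = n - 2 + i"
    have "k < 2 * n - 2" "sfl_planned n k = Suc i"
      using i n2 unfolding k_def sfl_planned_def by auto
    then have "sfl_planned_step n k x w = sfl_move (Suc i) x v j"
      using True x unfolding w sfl_planned_step_def by simp
    moreover have "section_measure (Suc i) (sfl_move (Suc i) x v j) = section_density i x ((1 - v) * ?m)"
      using i unfolding section_measure_def section_density_def sfl_move_def
      by (intro nn_integral_cong arg_cong[where f="indicator Bc"] restrict_ext) (auto simp: algebra_simps)
    ultimately show ?thesis
      using next_bound[OF v, of j] True unfolding w k_def[symmetric] by (simp add: mult_ac)
  qed
qed

lemma success_prob_follower_step: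
  assumes i: "1 \<le> i" "i < n" and x: "x 0 = 0" "sfl_ordered n x"
    and gap: "real (n - i) * lam \<le> x i - x (Suc i)"
    and next_bound: "\<And>v j. 0 \<le> v \<Longrightarrow> v \<le> 1 \<Longrightarrow> (1 - v) * (x i - x (Suc i)) \<le> lam \<Longrightarrow>
      C * section_measure (Suc i) (sfl_move (Suc i) x v j) \<le> success_prob (n - 1 + i) (sfl_move (Suc i) x v j)"
  shows "ennreal (1 / sfl_rate n x) * (C * section_measure i x) \<le> success_prob (n - 2 + i) x"
proof -
  have m: "lam \<le> x i - x (Suc i)" "0 < x i - x (Suc i)"
  proof -
    have "lam \<le> real (n - i) * lam" using i lam_pos by simp
    with gap show "lam \<le> x i - x (Suc i)" by linarith
    with lam_pos show "0 < x i - x (Suc i)" by linarith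
  qed
  have k: "n - 2 + i < 2 * n - 1" "Suc (n - 2 + i) = n - 1 + i" using i n2 by auto
  have "ennreal (1 / sfl_rate n x) * (C * section_measure i x)
    = (\<integral>\<^sup>+ w. indicator {0..} (fst w) * indicator {u. sfl_selects n (Suc i) x u} (fst (snd w))
      * section_density i x ((1 - fst (snd (snd w))) * (x i - x (Suc i))) * C
      \<partial>sfl_innov_measure \<theta>)"
    by (rule nn_integral_follower_scenario[OF i x(2) m, symmetric])
  also have "\<dots> \<le> (\<integral>\<^sup>+ w. success_prob (Suc (n - 2 + i)) (sfl_planned_step n (n - 2 + i) x w)
      \<partial>sfl_innov_measure \<theta>)"
    unfolding k(2) by (intro nn_integral_mono success_prob_follower_pointwise[OF i x m(1) next_bound])
  also have "\<dots> = success_prob (n - 2 + i) x"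
    by (rule success_prob_step[OF k(1), symmetric])
  finally show ?thesis .
qed

lemma success_prob_sweep:
  "1 \<le> i \<Longrightarrow> i \<le> n \<Longrightarrow> x 0 = 0 \<Longrightarrow> sfl_ordered n x
    \<Longrightarrow> (i < n \<longrightarrow> real (n - i) * lam \<le> x i - x (Suc i)) \<Longrightarrow> sfl_rate n x \<le> Rmax
    \<Longrightarrow> hold_prob * ennreal (1 / Rmax) ^ (n - i) * section_measure i x \<le> success_prob (n - 2 + i) x"
proof (induction "n - i" arbitrary: i x)
  case 0
  then have "i = n" "n - 2 + i = 2 * n - 2" using n2 by auto
  then show ?case using success_prob_hold[OF "0.prems"(3,4)] section_measure_last by simp
next
  case (Suc d)
  then have i: "1 \<le> i" "i < n" and gap: "real (n - i) * lam \<le> x i - x (Suc i)" by auto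
  define C where "C = hold_prob * ennreal (1 / Rmax) ^ (n - Suc i)"
  have step: "ennreal (1 / sfl_rate n x) * (C * section_measure i x) \<le> success_prob (n - 2 + i) x"
  proof (rule success_prob_follower_step[OF i Suc.prems(3,4) gap])
    fix v j assume v: "0 \<le> v" "v \<le> 1" "(1 - v) * (x i - x (Suc i)) \<le> lam"
    note x' = sfl_move_follower[OF i Suc.prems(3,4) gap v, of j]
    have "n - 2 + Suc i = n - 1 + i" using n2 by simp
    then show "C * section_measure (Suc i) (sfl_move (Suc i) x v j)
      \<le> success_prob (n - 1 + i) (sfl_move (Suc i) x v j)"
      using Suc.hyps(1)[of "Suc i" "sfl_move (Suc i) x v j"] Suc.hyps(2) i x' Suc.prems(6)
      unfolding C_def by (auto simp: mult_ac)
  qed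
  have "hold_prob * ennreal (1 / Rmax) ^ (n - i) * section_measure i x
      = ennreal (1 / Rmax) * (C * section_measure i x)"
    unfolding C_def using i by (cases "n - i") (auto simp: Suc_diff_Suc[symmetric] mult_ac)
  also have "\<dots> \<le> ennreal (1 / sfl_rate n x) * (C * section_measure i x)"
    using sfl_rate_ge_1[of n x] Suc.prems(4,6) n2
    by (intro mult_right_mono ennreal_leI divide_left_mono) auto
  also note step
  finally show ?case .
qed

lemma nn_integral_leader_scenario:
  assumes "sfl_ordered n x"
  shows "(\<integral>\<^sup>+ w. indicator {0..} (fst w) * indicator {u. sfl_selects n 1 x u} (fst (snd w))
      * 1 * (indicator leader_window (snd (snd (snd w))) * D)
      \<partial>sfl_innov_measure \<theta>)
    = ennreal (1 / sfl_rate n x) * (emeasure \<theta> leader_window * D)"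
proof -
  have "leader_window \<in> sets \<theta>" using sets_\<theta> by simp
  then have "(\<integral>\<^sup>+ J. indicator leader_window J * D \<partial>\<theta>) = emeasure \<theta> leader_window * D"
    by (simp add: nn_integral_multc)
  moreover have "1 \<le> n" using n2 by simp
  moreover have "(\<integral>\<^sup>+ w. indicator {0..} (fst w) * indicator {u. sfl_selects n 1 x u} (fst (snd w))
      * 1 * (indicator leader_window (snd (snd (snd w))) * D)
      \<partial>sfl_innov_measure \<theta>)
    = (\<integral>\<^sup>+ e. indicator {0..} e \<partial>exp_law)
      * ((\<integral>\<^sup>+ u. indicator {u. sfl_selects n 1 x u} u \<partial>unif_01)
      * ((\<integral>\<^sup>+ _. 1 \<partial>unif_01) * (\<integral>\<^sup>+ J. indicator leader_window J * D \<partial>\<theta>)))"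
    by (rule nn_integral_sfl_innov_measure_mult[OF prob_\<theta> sets_\<theta>])
      (auto intro: borel_measurable_indicator sets_sfl_selects)
  ultimately show ?thesis
    unfolding exp_law_nonneg unif_01_leader_selected[OF \<open>1 \<le> n\<close> assms]
    by (simp add: prob_space.emeasure_space_1[OF prob_space_unif_01])
qed

lemma success_prob_leader_step:
  assumes j: "j < n - 1" and x: "x 0 = 0" "sfl_ordered n x"
    and next_bound: "\<And>v J. J \<in> leader_window \<Longrightarrow> D \<le> success_prob (Suc j) (sfl_move 1 x v J)"
  shows "ennreal (1 / sfl_rate n x) * (emeasure \<theta> leader_window * D) \<le> success_prob j x"
proof -
  have k: "j < 2 * n - 1" "j < 2 * n - 2" "sfl_planned n j = 1"
    using j n2 unfolding sfl_planned_def by auto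
  have pw: "indicator {0..} (fst w) * indicator {u. sfl_selects n 1 x u} (fst (snd w)) * 1
      * (indicator leader_window (snd (snd (snd w))) * D)
      \<le> success_prob (Suc j) (sfl_planned_step n j x w)" for w
  proof -
    obtain e u v J where w: "w = (e, u, v, J)" by (cases w) auto
    show ?thesis
    proof (cases "0 \<le> e \<and> sfl_selects n 1 x u \<and> J \<in> leader_window")
      case False
      then show ?thesis unfolding w by (auto simp: indicator_def)
    next
      case True
      then have "sfl_planned_step n j x w = sfl_move 1 x v J"
        using x k unfolding w sfl_planned_step_def by simp
      then show ?thesis
        using next_bound[of J v] True unfolding w by simp
    qed
  qed
  have "ennreal (1 / sfl_rate n x) * (emeasure \<theta> leader_window * D)
    = (\<integral>\<^sup>+ w. indicator {0..} (fst w) * indicator {u. sfl_selects n 1 x u} (fst (snd w))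
      * 1 * (indicator leader_window (snd (snd (snd w))) * D)
      \<partial>sfl_innov_measure \<theta>)"
    by (rule nn_integral_leader_scenario[OF x(2), symmetric])
  also have "\<dots> \<le> (\<integral>\<^sup>+ w. success_prob (Suc j) (sfl_planned_step n j x w) \<partial>sfl_innov_measure \<theta>)"
    by (intro nn_integral_mono pw)
  also have "\<dots> = success_prob j x"
    by (rule success_prob_step[OF k(1), symmetric])
  finally show ?thesis .
qed

lemma success_prob_leader:
  "j \<le> n - 1 \<Longrightarrow> x 0 = 0 \<Longrightarrow> sfl_ordered n x \<Longrightarrow> real j * lam \<le> x 1 - x 2
    \<Longrightarrow> sfl_rate n x + 2 * lam * real (n - 1 - j) \<le> Rmax
    \<Longrightarrow> hold_prob * ennreal (1 / Rmax) ^ (n - 1) * emeasure (PiM {1..<n} (\<lambda>_. lborel)) Bc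
        * (ennreal (1 / Rmax) * emeasure \<theta> leader_window) ^ (n - 1 - j) \<le> success_prob j x"
proof (induction "n - 1 - j" arbitrary: j x)
  case 0
  then have j: "j = n - 1" by simp
  have "hold_prob * ennreal (1 / Rmax) ^ (n - 1) * section_measure 1 x \<le> success_prob (n - 2 + 1) x"
    by (rule success_prob_sweep) (use n2 "0.prems" j in \<open>auto simp: numeral_2_eq_2 of_nat_diff\<close>)
  moreover have "n - 2 + 1 = j" using j n2 by simp
  ultimately show ?case using "0.hyps" section_measure_first[of x] by simp
next
  case (Suc d)
  then have j: "j < n - 1" by simp
  define D where "D = hold_prob * ennreal (1 / Rmax) ^ (n - 1) * emeasure (PiM {1..<n} (\<lambda>_. lborel)) Bc
    * (ennreal (1 / Rmax) * emeasure \<theta> leader_window) ^ (n - 1 - Suc j)"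
  have step: "ennreal (1 / sfl_rate n x) * (emeasure \<theta> leader_window * D) \<le> success_prob j x"
  proof (rule success_prob_leader_step[OF j Suc.prems(2,3)])
    fix v J assume "J \<in> leader_window"
    moreover have "lam * (1 / (real n - 1)) \<le> lam * 1"
      using n2 lam_pos by (intro mult_left_mono) auto
    ultimately have J: "lam \<le> J" "J \<le> 2 * lam" by (auto simp: algebra_simps)
    note x' = sfl_move_leader[OF n2 Suc.prems(2,3), of J v]
    have "real (n - 1 - j) = real (n - 1 - Suc j) + 1" using j by linarith
    then show "D \<le> success_prob (Suc j) (sfl_move 1 x v J)"
      using Suc.hyps(1)[of "Suc j" "sfl_move 1 x v J"] Suc.hyps(2) Suc.prems(4,5) j x' J lam_pos
      unfolding D_def by (auto simp: algebra_simps)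
  qed
  have "0 \<le> 2 * lam * real (n - 1 - j)" using lam_pos by simp
  then have "sfl_rate n x \<le> Rmax" using Suc.prems(5) by linarith
  have "hold_prob * ennreal (1 / Rmax) ^ (n - 1) * emeasure (PiM {1..<n} (\<lambda>_. lborel)) Bc
      * (ennreal (1 / Rmax) * emeasure \<theta> leader_window) ^ (n - 1 - j)
      = ennreal (1 / Rmax) * (emeasure \<theta> leader_window * D)"
    unfolding D_def using j by (cases "n - 1 - j") (auto simp: Suc_diff_Suc[symmetric] mult_ac)
  also have "\<dots> \<le> ennreal (1 / sfl_rate n x) * (emeasure \<theta> leader_window * D)"
    using sfl_rate_ge_1[of n x] Suc.prems(3) n2 \<open>sfl_rate n x \<le> Rmax\<close>
    by (intro mult_right_mono ennreal_leI divide_left_mono) auto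
  also note step
  finally show ?case .
qed

lemma success_prob_pos:
  assumes "x0 0 = 0" "sfl_ordered n x0"
    and "0 < emeasure (PiM {1..<n} (\<lambda>_. lborel)) Bc" "0 < emeasure \<theta> leader_window"
  shows "0 < success_prob 0 x0"
proof -
  define Rmax where "Rmax = sfl_rate n x0 + 2 * lam * real (n - 1)"
  have "1 \<le> sfl_rate n x0" using sfl_rate_ge_1[of n x0] n2 assms(2) by simp
  moreover have "0 \<le> 2 * lam * real (n - 1)" using lam_pos by simp
  ultimately have "0 < Rmax" unfolding Rmax_def by linarith
  then have "0 < hold_prob * ennreal (1 / Rmax) ^ (n - 1) * emeasure (PiM {1..<n} (\<lambda>_. lborel)) Bc
      * (ennreal (1 / Rmax) * emeasure \<theta> leader_window) ^ (n - 1 - 0)"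
    using exp_law_ge_1_pos assms(3,4) by (simp add: ennreal_zero_less_mult_iff zero_less_iff_neq_zero)
  also have "\<dots> \<le> success_prob 0 x0"
    using sfl_ordered_mono[OF assms(2), of 1 2] n2 assms(1,2)
    by (intro success_prob_leader) (auto simp: Rmax_def)
  finally show ?thesis .
qed

lemma occupation_integrand_ge:
  assumes "Bc \<subseteq> B"
  shows "ennreal (1 / (1 + real (n - 1) * lam))
      * scenario_target (iter_map (sfl_planned_step n) (sfl_init y) \<omega> (2 * n - 1))
    \<le> (\<integral>\<^sup>+ t. indicator {t. t \<ge> 0 \<and> (\<exists>z\<in>B. sfl_Y n y \<omega> t = Some z)} t \<partial>lborel)"
proof -
  let ?path = "iter_map (sfl_planned_step n) (sfl_init y) \<omega>"
  let ?T = "sfl_time n (sfl_init y) \<omega>"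
  let ?N = "2 * n - 2"
  have N: "2 * n - 1 = Suc ?N" using n2 by simp
  show ?thesis
  proof (cases "?path (Suc ?N) 0 = 0 \<and> sfl_gaps n (?path (Suc ?N)) \<in> Bc")
    case False
    then show ?thesis unfolding N scenario_target_def by simp
  next
    case True
    then have alive: "?path (Suc ?N) 0 = 0" by blast
    have gaps: "sfl_gaps n (?path ?N) \<in> Bc"
      using True[unfolded planned_path_hold(3)[OF n2 alive]] by blast
    then have "sfl_gaps n (?path ?N) \<in> PiE {1..<n} (\<lambda>_. {0..lam})" using Bc_cube by blast
    note hold = sfl_holding_time_planned[OF n2 alive this]
    have incl: "{?T ?N..<?T (Suc ?N)} \<subseteq> {t. t \<ge> 0 \<and> (\<exists>z\<in>B. sfl_Y n y \<omega> t = Some z)}"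
    proof
      fix t assume t: "t \<in> {?T ?N..<?T (Suc ?N)}"
      have "0 \<le> ?T ?N" using sfl_time_mono_planned[OF n2 alive, of 0 ?N] by simp
      moreover have "sfl_Y n y \<omega> t = Some (sfl_gaps n (?path ?N))"
        using sfl_Y_planned_hold[OF n2 alive] t by simp
      ultimately show "t \<in> {t. t \<ge> 0 \<and> (\<exists>z\<in>B. sfl_Y n y \<omega> t = Some z)}"
        using t gaps assms by auto
    qed
    have "ennreal (1 / (1 + real (n - 1) * lam)) * scenario_target (?path (2 * n - 1))
        = ennreal (1 / (1 + real (n - 1) * lam))"
      using True unfolding N scenario_target_def by simp
    also have "\<dots> \<le> ennreal (?T (Suc ?N) - ?T ?N)"
      using hold by (rule ennreal_leI)
    also have "\<dots> = (\<integral>\<^sup>+ t. indicator {?T ?N..<?T (Suc ?N)} t \<partial>lborel)"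
      using sfl_time_Suc_ge_planned[OF n2 alive order.refl] by simp
    also have "\<dots> \<le> (\<integral>\<^sup>+ t. indicator {t. t \<ge> 0 \<and> (\<exists>z\<in>B. sfl_Y n y \<omega> t = Some z)} t \<partial>lborel)"
      using incl by (intro nn_integral_mono) (auto simp: indicator_def)
    finally show ?thesis .
  qed
qed

lemma sfl_occupation_pos:
  assumes y: "y \<in> PiE {1..<n} (\<lambda>_. {0..})" and "Bc \<subseteq> B"
    and "0 < emeasure (PiM {1..<n} (\<lambda>_. lborel)) Bc" "0 < emeasure \<theta> leader_window"
  shows "0 < sfl_occupation \<theta> n y B"
proof -
  let ?path = "\<lambda>\<omega>. iter_map (sfl_planned_step n) (sfl_init y) \<omega> (2 * n - 1)"
  define c where "c = 1 / (1 + real (n - 1) * lam)"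
  have "0 < c" unfolding c_def using lam_pos by (simp add: add_pos_nonneg)
  moreover have "0 < success_prob 0 (sfl_init y)"
    using sfl_init_0 sfl_ordered_sfl_init[OF y] assms(3,4) by (rule success_prob_pos)
  ultimately have "0 < ennreal c * success_prob 0 (sfl_init y)"
    by (simp add: ennreal_zero_less_mult_iff)
  also have "success_prob 0 (sfl_init y) = (\<integral>\<^sup>+ \<omega>. scenario_target (?path \<omega>) \<partial>sfl_paths \<theta>)"
    unfolding success_prob_def sfl_paths_def
    by (simp add: nn_integral_iter_map_PiM_UNIV[OF prob_space_sfl_innov_measure[OF prob_\<theta>]
        measurable_sfl_planned_step[OF sets_\<theta>] _ measurable_scenario_target] space_PiM)
  also have "ennreal c * \<dots> = (\<integral>\<^sup>+ \<omega>. ennreal c * scenario_target (?path \<omega>) \<partial>sfl_paths \<theta>)"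
  proof -
    have "?path \<in> measurable (sfl_paths \<theta>) position_space"
      unfolding sfl_paths_def
      by (rule measurable_iter_map[OF measurable_sfl_planned_step[OF sets_\<theta>]]) (auto simp: space_PiM)
    from measurable_comp[OF this measurable_scenario_target] show ?thesis
      by (simp add: nn_integral_cmult comp_def)
  qed
  also have "\<dots> \<le> sfl_occupation \<theta> n y B"
    unfolding sfl_occupation_def c_def by (intro nn_integral_mono occupation_integrand_ge assms(2))
  finally show ?thesis .
qed

end

end

lemma sfl_nu_pos_imp_cube_pos:
  assumes B: "B \<in> sets (PiM {1..<n} (\<lambda>_. borel))" and "0 < emeasure (sfl_nu n lam) B"
  shows "0 < emeasure (PiM {1..<n} (\<lambda>_. lborel)) (B \<inter> PiE {1..<n} (\<lambda>_. {0..lam}))"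
proof -
  have sl: "sets (PiM {1..<n} (\<lambda>_. lborel)) = sets (PiM {1..<n} (\<lambda>_. (borel :: real measure)))"
    by (intro sets_PiM_cong) auto
  have cube: "PiE {1..<n} (\<lambda>_. {0..lam}) \<in> sets (PiM {1..<n} (\<lambda>_. borel))"
    by (intro sets_PiM_I_finite) auto
  have "emeasure (sfl_nu n lam) B
      = emeasure (PiM {1..<n} (\<lambda>_. lborel)) (PiE {1..<n} (\<lambda>_. {0..lam}) \<inter> B)
        / emeasure (PiM {1..<n} (\<lambda>_. lborel)) (PiE {1..<n} (\<lambda>_. {0..lam}))"
    unfolding sfl_nu_def by (rule emeasure_uniform_measure) (use cube B sl in auto)
  then show ?thesis
    using assms(2) by (auto simp: Int_commute zero_less_iff_neq_zero)
qed

theorem proposition5p4: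
  fixes n :: nat and \<theta> :: "real measure" and lam :: real
  assumes n2: "n \<ge> 2"
    and theta_prob: "prob_space \<theta>"
    and theta_sets: "sets \<theta> = sets borel"
    and theta_pos: "emeasure \<theta> {0<..} = 1"
    and theta_int: "integrable \<theta> (\<lambda>x. x)"
    and theta_mean: "(\<integral>x. x \<partial>\<theta>) = 1"
    and lam_pos: "lam > 0"
    and theta_lam: "measure \<theta> {lam .. lam * (1 + 1 / (real n - 1))} > 0"
  shows "\<forall>y \<in> PiE {1..<n} (\<lambda>_. {0..}). \<forall>B \<in> sets (sfl_space n).
           B \<subseteq> PiE {1..<n} (\<lambda>_. {0..}) \<longrightarrow> emeasure (sfl_nu n lam) B > 0 \<longrightarrow>
           sfl_occupation \<theta> n y B > 0"
proof (intro ballI impI)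
  fix y :: "nat \<Rightarrow> real" and B :: "(nat \<Rightarrow> real) set"
  assume y: "y \<in> PiE {1..<n} (\<lambda>_. {0..})" and B: "B \<in> sets (sfl_space n)"
    and B_nu: "emeasure (sfl_nu n lam) B > 0"
  let ?cube = "PiE {1..<n} (\<lambda>_. {0..lam})"
  have sets_B: "B \<in> sets (PiM {1..<n} (\<lambda>_. borel))" using B unfolding sfl_space_def .
  then have "B \<inter> ?cube \<in> sets (PiM {1..<n} (\<lambda>_. borel))"
    by (intro sets.Int sets_PiM_I_finite) auto
  moreover have "0 < emeasure (PiM {1..<n} (\<lambda>_. lborel)) (B \<inter> ?cube)"
    using sets_B B_nu by (rule sfl_nu_pos_imp_cube_pos)
  moreover have "0 < emeasure \<theta> {lam .. lam * (1 + 1 / (real n - 1))}"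
    using theta_lam finite_measure.emeasure_eq_measure[OF prob_space.finite_measure[OF theta_prob]]
    by simp
  ultimately show "sfl_occupation \<theta> n y B > 0"
    using sfl_occupation_pos[OF _ Int_lower2 n2 theta_prob theta_sets lam_pos y Int_lower1] by blast
qed

end
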